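(* Let $\mathbb{F}_q$ be a finite field of characteristic $p$. For every $u\in\mathbb{F}_q$ with $u^3\ne27$, $$\#\mathcal{J}_{\mathrm{H},u}=\begin{cases}1,& \text{if } (p=2\text{ and } u=0) \text{ or } p=3,\\ 4,& \text{if } q\equiv1\pmod3,\ p\ne2,\ A_u=0,\\ 6,& \text{if } q\equiv1\pmod3,\ p\ne2,\ B_u=0,\\ 12,& \text{if } q\equiv1\pmod3 \text{ and } A_uB_u\ne0,\\ 2,& \text{if } q\equiv2\pmod3 \text{ and not } (p=2 \text{ and } u=0).\end{cases}$$
   Context: For $u\in\mathbb{F}_q$ with $u^3\ne27$, the Hessian curve $E_{\mathrm{H},u}$ is the elliptic curve $X^3+Y^3+1=uXY$ over $\mathbb{F}_q$; its $j$-invariant is $j(E_{\mathrm{H},u})=\left(\frac{u(u^3+216)}{u^3-27}\right)^3$. Two elliptic curves are isomorphic over $\overline{\mathbb{F}}_q$ iff they have the same $j$-invariant. Define $\mathcal{J}_{\mathrm{H},u}=\{v\in\mathbb{F}_q: v^3\ne27,\ E_{\mathrm{H},u}\cong_{\overline{\mathbb{F}}_q}E_{\mathrm{H},v}\}$. For $p\ne3$ put $A_u=-u(u^3+216)/3$ and $B_u=(u^6-540u^3-5832)/27$ (for $p>3$, $E_{\mathrm{H},u}$ is birationally equivalent to $\tilde Y^2=\tilde X^3+A_u\tilde X+B_u$). *)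

theory Defs
  imports "HOL-Number_Theory.Number_Theory"
begin

text \<open>j-invariant of the Hessian curve X^3+Y^3+1 = uXY (for u^3 \<noteq> 27).\<close>
definition j_hess :: "'a::field \<Rightarrow> 'a" where
  "j_hess u = (u * (u ^ 3 + 216) / (u ^ 3 - 27)) ^ 3"

text \<open>The set J_{H,u}: Hessian parameters v with E_{H,v} isomorphic to E_{H,u}
  over the algebraic closure, i.e. with the same j-invariant.\<close>
definition J_hess :: "'a::field \<Rightarrow> 'a set" where
  "J_hess u = {v. v ^ 3 \<noteq> 27 \<and> j_hess v = j_hess u}"

definition A_hess :: "'a::field \<Rightarrow> 'a" where
  "A_hess u = - u * (u ^ 3 + 216) / 3"

definition B_hess :: "'a::field \<Rightarrow> 'a" where
  "B_hess u = (u ^ 6 - 540 * u ^ 3 - 5832) / 27"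

end

theory Submission
  imports Defs "HOL-Computational_Algebra.Polynomial"
begin

text \<open>The j-invariant of \<open>E\<^sub>H\<^sub>,\<^sub>v\<close> is the cube of \<open>F(v) = v (v\<^sup>3 + 216) / (v\<^sup>3 - 27)\<close>,
  and \<open>F(v) = F(u)\<close> is a quartic condition on \<open>v\<close> splitting as a quadratic with roots
  \<open>u\<close>, \<open>3 (u + 6) / (u - 3)\<close> times a norm form that, up to a degenerate case with a
  double root, has roots only in the presence of a primitive cube root of unity.
  If \<open>q \<equiv> 1 (mod 3)\<close> there is such a root \<open>\<omega>\<close>, the fibre of \<open>F\<close> over \<open>F(u)\<close> has 4 or 2
  points according as \<open>B\<^sub>u \<noteq> 0\<close> or \<open>B\<^sub>u = 0\<close>, and \<open>F(v)\<^sup>3 = F(u)\<^sup>3\<close> means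
  \<open>F(v) \<in> {F(u), \<omega> F(u), \<omega>\<^sup>2 F(u)}\<close>; as \<open>F(\<zeta> v) = \<zeta> F(v)\<close> for \<open>\<zeta>\<^sup>3 = 1\<close>, these are three
  scaled copies of the fibre when \<open>F(u) \<noteq> 0\<close>, while \<open>F(u) = 0\<close> (i.e. \<open>A\<^sub>u = 0\<close>) leaves the
  4 roots of \<open>v (v\<^sup>3 + 216)\<close>. If \<open>q \<equiv> 2 (mod 3)\<close>, cubing is injective, so \<open>J\<^sub>H\<^sub>,\<^sub>u\<close> is the
  fibre, which has 2 points. In characteristic 3, \<open>F\<close> is the identity and cubing is
  injective.\<close>

section \<open>Finite fields and cube roots of unity\<close>

lemma of_nat_prime_eq_0_iff_CHAR:
  assumes "prime p"
  shows "(of_nat p :: 'a::{finite,field}) = 0 \<longleftrightarrow> CHAR('a) = p"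
proof -
  have "prime CHAR('a)"
    using prime_CHAR_semidom finite_imp_CHAR_pos[OF finite_UNIV] by blast
  then show ?thesis
    using assms by (auto simp: of_nat_eq_0_iff_char_dvd primes_dvd_imp_eq)
qed

lemma two_eq_0_iff_CHAR: "(2::'a::{finite,field}) = 0 \<longleftrightarrow> CHAR('a) = 2"
  using of_nat_prime_eq_0_iff_CHAR[of 2, where ?'a='a] by simp

lemma three_eq_0_iff_CHAR: "(3::'a::{finite,field}) = 0 \<longleftrightarrow> CHAR('a) = 3"
  using of_nat_prime_eq_0_iff_CHAR[of 3, where ?'a='a] by simp

lemma two_le_card_UNIV: "2 \<le> card (UNIV :: 'a::{finite,field} set)"
  using card_mono[of UNIV "{0, 1 :: 'a}"] by simp

lemma three_nonzero_if_card_mod_3: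
  assumes "card (UNIV :: 'a::{finite,field} set) mod 3 \<noteq> 0"
  shows "(3::'a) \<noteq> 0"
  using assms CHAR_dvd_CARD[where ?'a='a] three_eq_0_iff_CHAR[where ?'a='a] by auto

text \<open>The library's \<open>finite_field_power_card_eq_same\<close> needs the sort \<open>finite_field\<close>,
  which \<open>{finite, field}\<close> does not provide.\<close>

lemma power_card_minus_1_eq_1:
  fixes x :: "'a::{finite,field}"
  assumes "x \<noteq> 0"
  shows "x ^ (card (UNIV :: 'a set) - 1) = 1"
proof -
  let ?U = "UNIV - {0::'a}"
  have "bij_betw ((*) x) ?U ?U"
    using assms by (intro bij_betwI[of _ _ _ "\<lambda>y. y / x"]) auto
  then have "\<Prod>?U = (\<Prod>y\<in>?U. x * y)"
    using prod.reindex_bij_betw[of "(*) x" ?U ?U "\<lambda>y. y"] by simp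
  also have "\<dots> = x ^ card ?U * \<Prod>?U"
    by (simp add: prod.distrib)
  finally show ?thesis
    by (simp add: card_Diff_singleton)
qed

lemma cube_eq_1_iff: "(z::'a::field) ^ 3 = 1 \<longleftrightarrow> z = 1 \<or> z\<^sup>2 + z + 1 = 0"
proof -
  have "z ^ 3 - 1 = (z - 1) * (z\<^sup>2 + z + 1)"
    by (simp add: algebra_simps power2_eq_square power3_eq_cube)
  then show ?thesis
    by (metis mult_eq_0_iff right_minus_eq)
qed

lemma power3_eq_imp_eq:
  fixes x y :: "'a::field"
  assumes "\<And>w::'a. w\<^sup>2 + w + 1 \<noteq> 0" and "x ^ 3 = y ^ 3"
  shows "x = y"
proof (cases "y = 0")
  case False
  then have "(x / y) ^ 3 = 1"
    using assms(2) by (simp add: power_divide)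
  then show ?thesis
    using assms(1) False by (simp add: cube_eq_1_iff)
qed (use assms(2) in simp)

lemma primitive_cube_root_of_unity_exists:
  assumes "card (UNIV :: 'a::{finite,field} set) mod 3 = 1"
  shows "\<exists>w::'a. w\<^sup>2 + w + 1 = 0"
proof (rule ccontr)
  assume "\<nexists>w::'a. w\<^sup>2 + w + 1 = 0"
  then have "inj (\<lambda>x::'a. x ^ 3)"
    using power3_eq_imp_eq by (metis injI)
  then have surj: "surj (\<lambda>x::'a. x ^ 3)"
    by (simp add: finite_UNIV_inj_surj)
  define n where "n = (card (UNIV :: 'a set) - 1) div 3"
  have n: "card (UNIV :: 'a set) - 1 = 3 * n" "n > 0"
    using assms two_le_card_UNIV[where ?'a='a] unfolding n_def by presburger+
  define p :: "'a poly" where "p = monom 1 n - 1"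
  have "poly p 0 \<noteq> 0"
    using n(2) by (simp add: p_def poly_monom zero_power)
  then have "card {z. poly p z = 0} \<le> degree p"
    by (intro card_poly_roots_bound) auto
  also have "degree p \<le> n"
    unfolding p_def by (intro degree_diff_le degree_monom_le) simp
  finally have "card {z. poly p z = 0} \<le> n" .
  moreover have "UNIV - {0} \<subseteq> {z. poly p z = 0}"
  proof
    fix z :: 'a
    assume "z \<in> UNIV - {0}"
    moreover obtain y where y: "z = y ^ 3"
      using surj by (metis surjD)
    ultimately have "y \<noteq> 0"
      by simp
    have "z ^ n = y ^ (card (UNIV :: 'a set) - 1)"
      unfolding y n(1) by (simp only: power_mult)
    then have "z ^ n = 1"
      using power_card_minus_1_eq_1[OF \<open>y \<noteq> 0\<close>] by simp
    then show "z \<in> {z. poly p z = 0}"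
      by (simp add: p_def poly_monom)
  qed
  then have "card (UNIV :: 'a set) - 1 \<le> card {z. poly p z = 0}"
    using card_mono[of "{z. poly p z = 0}" "UNIV - {0::'a}"] by (simp add: card_Diff_singleton)
  ultimately show False
    using n by simp
qed

lemma no_primitive_cube_root_of_unity:
  assumes "card (UNIV :: 'a::{finite,field} set) mod 3 = 2"
  shows "(w::'a)\<^sup>2 + w + 1 \<noteq> 0"
proof
  assume w: "w\<^sup>2 + w + 1 = 0"
  then have "w ^ 3 = 1" "w \<noteq> 1"
    using cube_eq_1_iff[of w] three_nonzero_if_card_mod_3[where ?'a='a] assms by auto
  moreover have "\<exists>m. card (UNIV :: 'a set) - 1 = 3 * m + 1"
    using assms two_le_card_UNIV[where ?'a='a] by presburger
  then obtain m where "card (UNIV :: 'a set) - 1 = 3 * m + 1" ..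
  moreover have "w \<noteq> 0"
    using \<open>w ^ 3 = 1\<close> by auto
  ultimately have "1 = w ^ (3 * m + 1)"
    using power_card_minus_1_eq_1[of w] by simp
  also have "\<dots> = w"
    using \<open>w ^ 3 = 1\<close> by (simp add: power_add power_mult)
  finally show False
    using \<open>w \<noteq> 1\<close> by simp
qed

lemma power_2_mult_power_3_nonzero:
  assumes "(2::'a::field) \<noteq> 0" "(3::'a) \<noteq> 0"
  shows "(2 ^ i * 3 ^ k :: 'a) \<noteq> 0"
  using assms by simp

text \<open>A primitive cube root of unity is a root \<open>w\<close> of \<open>w\<^sup>2 + w + 1\<close>; the other one,
  \<open>w\<^sup>2\<close>, is written \<open>-1 - w\<close> throughout.\<close>

lemma primitive_cube_root_conj: "(w::'a::field)\<^sup>2 + w + 1 = 0 \<Longrightarrow> (-1 - w)\<^sup>2 + (-1 - w) + 1 = 0"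
  by (Groebner_Basis.algebra)

lemma primitive_cube_root_cube: "(w::'a::field)\<^sup>2 + w + 1 = 0 \<Longrightarrow> w ^ 3 = 1"
  using cube_eq_1_iff by blast

lemma primitive_cube_root_double_plus_1_nonzero:
  assumes "(w::'a::field)\<^sup>2 + w + 1 = 0" "(3::'a) \<noteq> 0"
  shows "2 * w + 1 \<noteq> 0"
proof
  assume "2 * w + 1 = 0"
  moreover have "(2 * w + 1)\<^sup>2 = - 3"
    using assms(1) by (Groebner_Basis.algebra)
  ultimately show False
    using assms(2) by simp
qed

lemma primitive_cube_roots_distinct:
  assumes "(w::'a::field)\<^sup>2 + w + 1 = 0" "(3::'a) \<noteq> 0"
  shows "1 \<noteq> w" "1 \<noteq> -1 - w" "w \<noteq> -1 - w"
proof -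
  show "1 \<noteq> w"
    using assms by auto
  show "1 \<noteq> -1 - w"
  proof
    assume "1 = -1 - w"
    then have "w\<^sup>2 + w + 1 = 3"
      by (Groebner_Basis.algebra)
    then show False
      using assms by simp
  qed
  show "w \<noteq> -1 - w"
    using primitive_cube_root_double_plus_1_nonzero[OF assms] by (auto simp: algebra_simps)
qed

lemma cube_diff_factor:
  assumes "(w::'a::field)\<^sup>2 + w + 1 = 0"
  shows "x ^ 3 - y ^ 3 = (x - y) * (x - w * y) * (x - (-1 - w) * y)"
  using assms by (Groebner_Basis.algebra)

lemma sub_3_mult_cube_root_nonzero:
  assumes "(c::'a::field) ^ 3 = 1" "u ^ 3 \<noteq> 27"
  shows "u - 3 * c \<noteq> 0"
  using assms by (auto simp: power_mult_distrib)

section \<open>A cube root of the j-invariant\<close>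

text \<open>\<open>hess_L u v * hess_R u v\<close> is the numerator of \<open>j_cbrt v - j_cbrt u\<close>. The factor
  \<open>hess_L\<close> has the roots \<open>u\<close> and \<open>hess_sigma u\<close>; \<open>hess_R\<close> is the norm form
  \<open>a\<^sup>2 + a b + b\<^sup>2\<close> of \<open>a = 18 + u v\<close>, \<open>b = 3 u + 3 v - 18\<close>, so it splits, with roots
  \<open>hess_tau u w\<close> and \<open>hess_tau u (-1 - w)\<close>, if there is a primitive cube root of unity \<open>w\<close>,
  and otherwise has a root only if \<open>hess_W u 1 = 0\<close>. Coincidences among these four roots are governed by the factors
  \<open>hess_W u \<zeta>\<close>, \<open>\<zeta>\<^sup>3 = 1\<close>, of \<open>27 * B_hess u\<close>.\<close>

definition j_cbrt :: "'a::field \<Rightarrow> 'a" where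
  "j_cbrt v = v * (v ^ 3 + 216) / (v ^ 3 - 27)"

definition j_cbrt_fibre :: "'a::field \<Rightarrow> 'a set" where
  "j_cbrt_fibre u = {v. v ^ 3 \<noteq> 27 \<and> j_cbrt v = j_cbrt u}"

definition hess_L :: "'a::field \<Rightarrow> 'a \<Rightarrow> 'a" where
  "hess_L u v = (v - u) * ((u - 3) * v - 3 * (u + 6))"

definition hess_R :: "'a::field \<Rightarrow> 'a \<Rightarrow> 'a" where
  "hess_R u v = (18 + u * v)\<^sup>2 + (18 + u * v) * (3 * u + 3 * v - 18) + (3 * u + 3 * v - 18)\<^sup>2"

definition hess_W :: "'a::field \<Rightarrow> 'a \<Rightarrow> 'a" where
  "hess_W u c = u\<^sup>2 - 6 * c * u - 18 * c\<^sup>2"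

definition hess_sigma :: "'a::field \<Rightarrow> 'a" where
  "hess_sigma u = 3 * (u + 6) / (u - 3)"

definition hess_tau :: "'a::field \<Rightarrow> 'a \<Rightarrow> 'a" where
  "hess_tau u w = (3 * w * u - 18 * w - 18) / (u - 3 * w)"

lemma j_hess_eq_j_cbrt_cube: "j_hess v = j_cbrt v ^ 3"
  by (simp add: j_hess_def j_cbrt_def)

lemma hess_L_mult_hess_R:
  "hess_L u v * hess_R u v = (u ^ 3 - 27) * (v * (v ^ 3 + 216)) - u * (u ^ 3 + 216) * (v ^ 3 - 27)"
  unfolding hess_L_def hess_R_def by (Groebner_Basis.algebra)

lemma j_cbrt_eq_iff:
  assumes "u ^ 3 \<noteq> 27" "(v::'a::field) ^ 3 \<noteq> 27"
  shows "j_cbrt v = j_cbrt u \<longleftrightarrow> hess_L u v * hess_R u v = 0"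
  using assms unfolding j_cbrt_def hess_L_mult_hess_R
  by (simp add: frac_eq_eq right_minus_eq mult_ac)

lemma cube_ne_27_if_hess_L_mult_hess_R_eq_0:
  assumes "(3::'a::field) \<noteq> 0" "u ^ 3 \<noteq> 27" "hess_L u v * hess_R u v = 0"
  shows "(v::'a) ^ 3 \<noteq> 27"
proof
  assume v: "v ^ 3 = 27"
  then have "(u ^ 3 - 27) * (243 * v) = 0"
    using assms(3) unfolding hess_L_mult_hess_R by auto
  moreover have "(243::'a) \<noteq> 0"
    using power_not_zero[OF assms(1), of 5] by simp
  ultimately have "v = 0"
    using assms(2) by auto
  with v show False
    using power_not_zero[OF assms(1), of 3] by simp
qed

lemma j_cbrt_fibre_eq:
  assumes "(3::'a::field) \<noteq> 0" "u ^ 3 \<noteq> 27"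
  shows "j_cbrt_fibre u = {v::'a. hess_L u v = 0 \<or> hess_R u v = 0}"
  using j_cbrt_eq_iff[OF assms(2)] cube_ne_27_if_hess_L_mult_hess_R_eq_0[OF assms]
  unfolding j_cbrt_fibre_def by auto

lemma hess_L_eq_0_iff:
  assumes "(u::'a::field) ^ 3 \<noteq> 27"
  shows "hess_L u v = 0 \<longleftrightarrow> v = u \<or> v = hess_sigma u"
  using sub_3_mult_cube_root_nonzero[of 1, OF _ assms]
  by (simp add: hess_L_def hess_sigma_def eq_divide_eq right_minus_eq mult.commute)

lemma hess_R_eq_0_iff:
  assumes w: "(w::'a::field)\<^sup>2 + w + 1 = 0" and u: "u ^ 3 \<noteq> 27"
  shows "hess_R u v = 0 \<longleftrightarrow> v = hess_tau u w \<or> v = hess_tau u (-1 - w)"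
proof -
  have root: "v * (u - 3 * c) - (3 * c * u - 18 * c - 18) = 0 \<longleftrightarrow> v = hess_tau u c"
    if "c ^ 3 = 1" for c
    using sub_3_mult_cube_root_nonzero[OF that u]
    by (auto simp: hess_tau_def eq_divide_eq)
  have "hess_R u v = (v * (u - 3 * w) - (3 * w * u - 18 * w - 18))
      * (v * (u - 3 * (-1 - w)) - (3 * (-1 - w) * u - 18 * (-1 - w) - 18))"
    unfolding hess_R_def using w by (Groebner_Basis.algebra)
  then show ?thesis
    using root[OF primitive_cube_root_cube[OF w]]
      root[OF primitive_cube_root_cube[OF primitive_cube_root_conj[OF w]]] by simp
qed

lemma hess_W_1: "hess_W u 1 = u\<^sup>2 - 6 * u - 18"
  by (simp add: hess_W_def)

lemma hess_sigma_eq_self_iff: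
  assumes "(u::'a::field) ^ 3 \<noteq> 27"
  shows "hess_sigma u = u \<longleftrightarrow> hess_W u 1 = 0"
proof -
  have "u - 3 \<noteq> 0"
    using sub_3_mult_cube_root_nonzero[of 1, OF _ assms] by simp
  then have "hess_sigma u = u \<longleftrightarrow> 3 * (u + 6) - u * (u - 3) = 0"
    unfolding hess_sigma_def by (simp add: divide_eq_eq)
  also have "3 * (u + 6) - u * (u - 3) = - hess_W u 1"
    unfolding hess_W_1 by (Groebner_Basis.algebra)
  finally show ?thesis
    by simp
qed

lemma hess_tau_eq_self_iff:
  assumes "(w::'a::field)\<^sup>2 + w + 1 = 0" "u ^ 3 \<noteq> 27"
  shows "hess_tau u w = u \<longleftrightarrow> hess_W u w = 0"
proof -
  have "u - 3 * w \<noteq> 0"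
    using sub_3_mult_cube_root_nonzero[OF primitive_cube_root_cube assms(2)] assms(1) .
  then have "hess_tau u w = u \<longleftrightarrow> 3 * w * u - 18 * w - 18 - u * (u - 3 * w) = 0"
    unfolding hess_tau_def by (simp add: divide_eq_eq)
  also have "3 * w * u - 18 * w - 18 - u * (u - 3 * w) = - hess_W u w"
    unfolding hess_W_def using assms(1) by (Groebner_Basis.algebra)
  finally show ?thesis
    by simp
qed

lemma hess_sigma_eq_hess_tau_iff:
  assumes w: "(w::'a::field)\<^sup>2 + w + 1 = 0" and u: "u ^ 3 \<noteq> 27" and three: "(3::'a) \<noteq> 0"
  shows "hess_sigma u = hess_tau u w \<longleftrightarrow> hess_W u (-1 - w) = 0"
proof -
  have "u - 3 \<noteq> 0" "u - 3 * w \<noteq> 0"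
    using sub_3_mult_cube_root_nonzero[of 1, OF _ u]
      sub_3_mult_cube_root_nonzero[OF primitive_cube_root_cube[OF w] u] by simp_all
  then have "hess_sigma u = hess_tau u w \<longleftrightarrow>
      3 * (u + 6) * (u - 3 * w) - (3 * w * u - 18 * w - 18) * (u - 3) = 0"
    unfolding hess_sigma_def hess_tau_def by (simp add: frac_eq_eq)
  also have "3 * (u + 6) * (u - 3 * w) - (3 * w * u - 18 * w - 18) * (u - 3)
      = 3 * (1 - w) * hess_W u (-1 - w)"
    unfolding hess_W_def using w by (Groebner_Basis.algebra)
  finally show ?thesis
    using three primitive_cube_roots_distinct(1)[OF w three] by simp
qed

lemma hess_tau_eq_hess_tau_conj_iff:
  assumes w: "(w::'a::field)\<^sup>2 + w + 1 = 0" and u: "u ^ 3 \<noteq> 27" and three: "(3::'a) \<noteq> 0"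
  shows "hess_tau u w = hess_tau u (-1 - w) \<longleftrightarrow> hess_W u 1 = 0"
proof -
  have "u - 3 * w \<noteq> 0" "u - 3 * (-1 - w) \<noteq> 0"
    using sub_3_mult_cube_root_nonzero[OF _ u] primitive_cube_root_cube
      primitive_cube_root_conj w by blast+
  then have "hess_tau u w = hess_tau u (-1 - w) \<longleftrightarrow>
      (3 * w * u - 18 * w - 18) * (u - 3 * (-1 - w))
        - (3 * (-1 - w) * u - 18 * (-1 - w) - 18) * (u - 3 * w) = 0"
    unfolding hess_tau_def by (simp add: frac_eq_eq)
  also have "(3 * w * u - 18 * w - 18) * (u - 3 * (-1 - w))
      - (3 * (-1 - w) * u - 18 * (-1 - w) - 18) * (u - 3 * w)
      = 3 * (2 * w + 1) * hess_W u 1"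
    unfolding hess_W_1 by (Groebner_Basis.algebra)
  finally show ?thesis
    using three primitive_cube_root_double_plus_1_nonzero[OF w three] by (metis mult_eq_0_iff)
qed

lemma hess_W_not_both_zero:
  assumes "(u::'a::field) ^ 3 \<noteq> 27" "c ^ 3 = 1" "a + b + c = 0" "a \<noteq> b" "(6::'a) \<noteq> 0"
  shows "hess_W u a \<noteq> 0 \<or> hess_W u b \<noteq> 0"
proof -
  have "hess_W u a - hess_W u b = - 6 * (a - b) * (u - 3 * c)"
    unfolding hess_W_def using assms(3) by (Groebner_Basis.algebra)
  moreover have "u - 3 * c \<noteq> 0"
    using sub_3_mult_cube_root_nonzero[OF assms(2,1)] .
  ultimately show ?thesis
    using assms(4,5) by auto
qed

lemma B_hess_eq_hess_W_prod:
  assumes "(w::'a::field)\<^sup>2 + w + 1 = 0" "(3::'a) \<noteq> 0"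
  shows "27 * B_hess u = hess_W u 1 * hess_W u w * hess_W u (-1 - w)"
proof -
  have "u ^ 6 - 540 * u ^ 3 - 5832 = hess_W u 1 * hess_W u w * hess_W u (-1 - w)"
    unfolding hess_W_1 unfolding hess_W_def using assms(1) by (Groebner_Basis.algebra)
  then show ?thesis
    unfolding B_hess_def using power_not_zero[OF assms(2), of 3] by simp
qed

lemma j_cbrt_fibre_eq_roots:
  assumes "(w::'a::field)\<^sup>2 + w + 1 = 0" "u ^ 3 \<noteq> 27" "(3::'a) \<noteq> 0"
  shows "j_cbrt_fibre u = {u, hess_sigma u, hess_tau u w, hess_tau u (-1 - w)}"
  unfolding j_cbrt_fibre_eq[OF assms(3,2)]
  using hess_L_eq_0_iff[OF assms(2)] hess_R_eq_0_iff[OF assms(1,2)] by auto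

lemma card_j_cbrt_fibre_if_B_hess_nonzero:
  assumes w: "(w::'a::field)\<^sup>2 + w + 1 = 0" and u: "(u::'a) ^ 3 \<noteq> 27"
    and three: "(3::'a) \<noteq> 0" and B: "B_hess u \<noteq> 0"
  shows "card (j_cbrt_fibre u) = 4"
proof -
  have W: "hess_W u 1 \<noteq> 0" "hess_W u w \<noteq> 0" "hess_W u (-1 - w) \<noteq> 0"
    using B B_hess_eq_hess_W_prod[OF w three, of u] power_not_zero[OF three, of 3] by auto
  have w': "(-1 - w)\<^sup>2 + (-1 - w) + 1 = 0"
    using primitive_cube_root_conj[OF w] .
  show ?thesis
    unfolding j_cbrt_fibre_eq_roots[OF w u three]
    using W hess_sigma_eq_self_iff[OF u] hess_tau_eq_self_iff[OF w u] hess_tau_eq_self_iff[OF w' u]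
      hess_sigma_eq_hess_tau_iff[OF w u three] hess_sigma_eq_hess_tau_iff[OF w' u three]
      hess_tau_eq_hess_tau_conj_iff[OF w u three]
    by (simp add: eq_commute[of u])
qed

lemma card_j_cbrt_fibre_if_B_hess_eq_0:
  assumes w: "(w::'a::field)\<^sup>2 + w + 1 = 0" and u: "(u::'a) ^ 3 \<noteq> 27"
    and two: "(2::'a) \<noteq> 0" and three: "(3::'a) \<noteq> 0" and B: "B_hess u = 0"
  shows "card (j_cbrt_fibre u) = 2"
proof -
  have w': "(-1 - w)\<^sup>2 + (-1 - w) + 1 = 0"
    using primitive_cube_root_conj[OF w] .
  have cube: "(1::'a) ^ 3 = 1" "w ^ 3 = 1" "(-1 - w) ^ 3 = 1"
    using primitive_cube_root_cube[OF w] primitive_cube_root_cube[OF w'] by auto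
  note distinct = primitive_cube_roots_distinct[OF w three]
  have six: "(6::'a) \<noteq> 0"
    using power_2_mult_power_3_nonzero[OF two three, of 1 1] by simp
  have not_both: "\<not> (hess_W u 1 = 0 \<and> hess_W u w = 0)"
    "\<not> (hess_W u 1 = 0 \<and> hess_W u (-1 - w) = 0)"
    "\<not> (hess_W u w = 0 \<and> hess_W u (-1 - w) = 0)"
    using hess_W_not_both_zero[OF u cube(3), of 1 w] hess_W_not_both_zero[OF u cube(2), of 1 "-1 - w"]
      hess_W_not_both_zero[OF u cube(1), of w "-1 - w"] distinct six by auto
  have "hess_W u 1 * hess_W u w * hess_W u (-1 - w) = 0"
    using B_hess_eq_hess_W_prod[OF w three, of u] B by simp
  then consider "hess_W u 1 = 0" | "hess_W u w = 0" | "hess_W u (-1 - w) = 0"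
    by auto
  then show ?thesis
    unfolding j_cbrt_fibre_eq_roots[OF w u three]
    using not_both hess_sigma_eq_self_iff[OF u] hess_tau_eq_self_iff[OF w u]
      hess_tau_eq_self_iff[OF w' u] hess_sigma_eq_hess_tau_iff[OF w u three]
      hess_sigma_eq_hess_tau_iff[OF w' u three] hess_tau_eq_hess_tau_conj_iff[OF w u three]
    by cases (auto simp: insert_commute)
qed

lemma hess_R_eq_0_imp_primitive_cube_root:
  assumes "(3::'a::field) \<noteq> 0" "hess_W (u::'a) 1 \<noteq> 0" "hess_R u v = 0"
  shows "\<exists>w::'a. w\<^sup>2 + w + 1 = 0"
proof -
  define a where "a = 18 + u * v"
  define b where "b = 3 * u + 3 * v - 18"
  have R: "a\<^sup>2 + a * b + b\<^sup>2 = 0"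
    using assms(3) unfolding hess_R_def a_def b_def .
  have "3 * hess_W u 1 = u * b - 3 * a"
    unfolding hess_W_1 a_def b_def by (Groebner_Basis.algebra)
  then have "b \<noteq> 0"
    using assms(1,2) R by auto
  then have "(a / b)\<^sup>2 + a / b + 1 = 0"
    using R by (simp add: field_simps power2_eq_square)
  then show ?thesis ..
qed

lemma hess_R_self_nonzero:
  assumes "(2::'a::field) \<noteq> 0" "(3::'a) \<noteq> 0" "(u::'a) ^ 3 \<noteq> 27" "hess_W u 1 = 0"
  shows "hess_R u u \<noteq> 0"
proof -
  have "hess_R u u = 108 * (u\<^sup>2 + 3 * u + 9) + (u + 6)\<^sup>2 * hess_W u 1"
    unfolding hess_R_def hess_W_1 by (Groebner_Basis.algebra)
  then have "hess_R u u = 108 * (u\<^sup>2 + 3 * u + 9)"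
    using assms(4) by simp
  moreover have "(u - 3) * (u\<^sup>2 + 3 * u + 9) = u ^ 3 - 27"
    by (Groebner_Basis.algebra)
  then have "u\<^sup>2 + 3 * u + 9 \<noteq> 0"
    using assms(3) by auto
  moreover have "(108::'a) \<noteq> 0"
    using power_2_mult_power_3_nonzero[OF assms(1,2), of 2 3] by simp
  ultimately show ?thesis
    by (metis mult_eq_0_iff)
qed

lemma hess_R_roots_if_hess_W_1_eq_0:
  assumes "(2::'a::field) \<noteq> 0" "(3::'a) \<noteq> 0" "(u::'a) ^ 3 \<noteq> 27" "hess_W u 1 = 0"
  shows "{v. hess_R u v = 0} = {- 3 * (u\<^sup>2 + 12 * u - 18) / (2 * (u\<^sup>2 + 3 * u + 9))}"
proof -
  define \<alpha> where "\<alpha> = u\<^sup>2 + 3 * u + 9"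
  define \<beta> where "\<beta> = 3 * (u\<^sup>2 + 12 * u - 18)"
  have "(u - 3) * \<alpha> = u ^ 3 - 27"
    unfolding \<alpha>_def by (Groebner_Basis.algebra)
  then have "2 * \<alpha> \<noteq> 0"
    using assms(1,3) by auto
  have "hess_R u v = 0 \<longleftrightarrow> v = - \<beta> / (2 * \<alpha>)" for v
  proof -
    have "4 * \<alpha> * hess_R u v = (2 * \<alpha> * v + \<beta>)\<^sup>2 + 27 * (hess_W u 1)\<^sup>2"
      unfolding \<alpha>_def \<beta>_def hess_R_def hess_W_1 by (Groebner_Basis.algebra)
    then have "4 * \<alpha> * hess_R u v = (2 * \<alpha> * v + \<beta>)\<^sup>2"
      using assms(4) by simp
    moreover have "4 * \<alpha> \<noteq> 0"
      using \<open>2 * \<alpha> \<noteq> 0\<close> power_2_mult_power_3_nonzero[OF assms(1,2), of 2 0] by simp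
    ultimately have "hess_R u v = 0 \<longleftrightarrow> 2 * \<alpha> * v + \<beta> = 0"
      by (metis mult_eq_0_iff power2_eq_square)
    also have "\<dots> \<longleftrightarrow> v * (2 * \<alpha>) = - \<beta>"
      by (simp add: add_eq_0_iff2 mult.commute)
    also have "\<dots> \<longleftrightarrow> v = - \<beta> / (2 * \<alpha>)"
      by (rule nonzero_eq_divide_eq[OF \<open>2 * \<alpha> \<noteq> 0\<close>, symmetric])
    finally show ?thesis .
  qed
  then show ?thesis
    unfolding \<alpha>_def \<beta>_def by auto
qed

lemma card_j_cbrt_fibre_without_primitive_cube_root:
  assumes no_root: "\<And>w::'a::field. w\<^sup>2 + w + 1 \<noteq> 0" and u: "(u::'a) ^ 3 \<noteq> 27"
    and three: "(3::'a) \<noteq> 0" and "\<not> ((2::'a) = 0 \<and> u = 0)"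
  shows "card (j_cbrt_fibre u) = 2"
proof (cases "hess_W u 1 = 0")
  case False
  then have "hess_R u v \<noteq> 0" for v
    using hess_R_eq_0_imp_primitive_cube_root[OF three] no_root by blast
  then have "j_cbrt_fibre u = {u, hess_sigma u}"
    unfolding j_cbrt_fibre_eq[OF three u] using hess_L_eq_0_iff[OF u] by auto
  then show ?thesis
    using hess_sigma_eq_self_iff[OF u] False by simp
next
  case True
  have two: "(2::'a) \<noteq> 0"
  proof
    assume "(2::'a) = 0"
    moreover have "hess_W u 1 = u\<^sup>2 - 2 * (3 * u + 9)"
      unfolding hess_W_1 by simp
    ultimately show False
      using True assms(4) by simp
  qed
  obtain r where R: "{v. hess_R u v = 0} = {r}"
    using hess_R_roots_if_hess_W_1_eq_0[OF two three u True] by blast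
  have "j_cbrt_fibre u = {u, hess_sigma u} \<union> {v. hess_R u v = 0}"
    unfolding j_cbrt_fibre_eq[OF three u] hess_L_eq_0_iff[OF u] by auto
  also have "\<dots> = {u, r}"
    unfolding R using hess_sigma_eq_self_iff[OF u] True by (simp add: insert_commute)
  finally show ?thesis
    using R hess_R_self_nonzero[OF two three u True] by auto
qed

section \<open>Counting \<open>J_hess\<close>\<close>

lemma J_hess_eq: "J_hess u = {v. v ^ 3 \<noteq> 27 \<and> j_cbrt v ^ 3 = j_cbrt u ^ 3}"
  unfolding J_hess_def j_hess_eq_j_cbrt_cube ..

lemma J_hess_eq_j_cbrt_fibre:
  assumes "\<And>w::'a::field. w\<^sup>2 + w + 1 \<noteq> 0"
  shows "J_hess (u::'a) = j_cbrt_fibre u"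
  unfolding J_hess_eq j_cbrt_fibre_def using power3_eq_imp_eq[OF assms] by metis

lemma j_cbrt_mult_cube_root: "(c::'a::field) ^ 3 = 1 \<Longrightarrow> j_cbrt (c * x) = c * j_cbrt x"
  by (simp add: j_cbrt_def power_mult_distrib)

lemma image_mult_j_cbrt_fibre:
  assumes c: "(c::'a::field) ^ 3 = 1"
  shows "(*) c ` j_cbrt_fibre u = {v. v ^ 3 \<noteq> 27 \<and> j_cbrt v = c * j_cbrt u}"
proof (intro equalityI subsetI)
  fix v
  assume "v \<in> (*) c ` j_cbrt_fibre u"
  then show "v \<in> {v. v ^ 3 \<noteq> 27 \<and> j_cbrt v = c * j_cbrt u}"
    using c j_cbrt_mult_cube_root[OF c] by (auto simp: j_cbrt_fibre_def power_mult_distrib)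
next
  fix v
  assume v: "v \<in> {v. v ^ 3 \<noteq> 27 \<and> j_cbrt v = c * j_cbrt u}"
  have c2: "(c\<^sup>2) ^ 3 = 1"
    using c by (metis power_mult power_mult_distrib power_one mult.commute)
  have "(c\<^sup>2 * v) ^ 3 = v ^ 3"
    using c2 by (simp add: power_mult_distrib)
  moreover have "j_cbrt (c\<^sup>2 * v) = c ^ 3 * j_cbrt u"
    using v j_cbrt_mult_cube_root[OF c2, of v] by (simp add: power2_eq_square power3_eq_cube)
  ultimately have "c\<^sup>2 * v \<in> j_cbrt_fibre u"
    using v c by (simp add: j_cbrt_fibre_def)
  moreover have "v = c * (c\<^sup>2 * v)"
    using c by (simp add: power2_eq_square power3_eq_cube mult_ac)
  ultimately show "v \<in> (*) c ` j_cbrt_fibre u"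
    by blast
qed

lemma card_J_hess_eq_3_mult_card_j_cbrt_fibre:
  assumes w: "(w::'a::field)\<^sup>2 + w + 1 = 0" and u: "(u::'a) ^ 3 \<noteq> 27"
    and three: "(3::'a) \<noteq> 0" and nz: "j_cbrt u \<noteq> 0"
  shows "card (J_hess u) = 3 * card (j_cbrt_fibre u)"
proof -
  define C where "C = {1, w, -1 - w}"
  have cube: "c ^ 3 = 1" if "c \<in> C" for c
    using that primitive_cube_root_cube[OF w]
      primitive_cube_root_cube[OF primitive_cube_root_conj[OF w]] by (auto simp: C_def)
  have "card C = 3"
    using primitive_cube_roots_distinct[OF w three] by (simp add: C_def)
  have "j_cbrt v ^ 3 = j_cbrt u ^ 3 \<longleftrightarrow> (\<exists>c\<in>C. j_cbrt v = c * j_cbrt u)" for v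
    using cube_diff_factor[OF w, of "j_cbrt v" "j_cbrt u"] by (auto simp: C_def right_minus_eq)
  then have J: "J_hess u = (\<Union>c\<in>C. (*) c ` j_cbrt_fibre u)"
    unfolding J_hess_eq using image_mult_j_cbrt_fibre[OF cube] by auto
  have finite: "finite (j_cbrt_fibre u)"
    unfolding j_cbrt_fibre_eq_roots[OF w u three] by simp
  have "card ((*) c ` j_cbrt_fibre u) = card (j_cbrt_fibre u)" if "c \<in> C" for c
    using cube[OF that] by (intro card_image inj_on_mult) auto
  moreover have "(*) c ` j_cbrt_fibre u \<inter> (*) d ` j_cbrt_fibre u = {}"
    if "c \<in> C" "d \<in> C" "c \<noteq> d" for c d
    using that nz unfolding image_mult_j_cbrt_fibre[OF cube[OF that(1)]]
      image_mult_j_cbrt_fibre[OF cube[OF that(2)]] by auto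
  ultimately show ?thesis
    unfolding J using finite \<open>card C = 3\<close>
    by (subst card_UN_disjoint) (auto simp: C_def)
qed

lemma card_J_hess_if_A_hess_eq_0:
  assumes w: "(w::'a::field)\<^sup>2 + w + 1 = 0" and two: "(2::'a) \<noteq> 0" and three: "(3::'a) \<noteq> 0"
    and A: "A_hess (u::'a) = 0"
  shows "card (J_hess u) = 4"
proof -
  have six: "(6::'a) \<noteq> 0"
    using power_2_mult_power_3_nonzero[OF two three, of 1 1] by simp
  have "u * (u ^ 3 + 216) = 0"
    using A three by (simp add: A_hess_def)
  then have j0: "j_cbrt u = 0"
    by (simp add: j_cbrt_def)
  have ne: "v ^ 3 \<noteq> 27" if "v * (v ^ 3 + 216) = 0" for v :: 'a
    using that power_not_zero[OF three, of 3] power_not_zero[OF three, of 5] by auto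
  have "J_hess u = {v. v * (v ^ 3 + 216) = 0}"
    unfolding J_hess_eq j0 using ne by (auto simp: j_cbrt_def)
  also have "\<dots> = {v. (v - 0) * (v - (- 6)) * (v - (- 6 * w)) * (v - (- 6 * (-1 - w))) = 0}"
  proof -
    have "v * (v ^ 3 + 216) = (v - 0) * (v - (- 6)) * (v - (- 6 * w)) * (v - (- 6 * (-1 - w)))"
      for v
      using w by (Groebner_Basis.algebra)
    then show ?thesis
      by (simp only:)
  qed
  also have "\<dots> = (*) (- 6) ` {0, 1, w, -1 - w}"
    unfolding mult_eq_0_iff right_minus_eq by auto
  finally have "card (J_hess u) = card {0, 1, w, -1 - w}"
    using six by (metis card_image inj_on_mult neg_equal_0_iff_equal)
  moreover have "w \<noteq> 0" "-1 - w \<noteq> 0"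
    using w by (auto simp: algebra_simps)
  ultimately show ?thesis
    using primitive_cube_roots_distinct[OF w three] by auto
qed

lemma j_cbrt_nonzero_if_A_hess_nonzero:
  assumes "(u::'a::field) ^ 3 \<noteq> 27" "A_hess u \<noteq> 0"
  shows "j_cbrt u \<noteq> 0"
  using assms by (auto simp: j_cbrt_def A_hess_def)

lemma B_hess_nonzero_if_A_hess_eq_0:
  assumes "(2::'a::field) \<noteq> 0" "(3::'a) \<noteq> 0" "A_hess (u::'a) = 0"
  shows "B_hess u \<noteq> 0"
proof -
  have B: "27 * B_hess u = (u ^ 3)\<^sup>2 - 540 * u ^ 3 - 5832"
    using power_not_zero[OF assms(2), of 3] unfolding B_hess_def by (simp add: power_mult[symmetric])
  have "u ^ 3 = 0 \<or> u ^ 3 = - 216"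
    using assms(2,3) by (auto simp: A_hess_def add_eq_0_iff2)
  then have "27 * B_hess u = - (2 ^ 3 * 3 ^ 6) \<or> 27 * B_hess u = 2 ^ 3 * 3 ^ 9"
    unfolding B by (elim disjE) (simp_all only:, simp_all)
  then show ?thesis
    using power_2_mult_power_3_nonzero[OF assms(1,2), of 3 6]
      power_2_mult_power_3_nonzero[OF assms(1,2), of 3 9] by auto
qed

lemma card_J_hess_if_B_hess_eq_0:
  assumes w: "(w::'a::field)\<^sup>2 + w + 1 = 0" and u: "(u::'a) ^ 3 \<noteq> 27"
    and two: "(2::'a) \<noteq> 0" and three: "(3::'a) \<noteq> 0" and B: "B_hess u = 0"
  shows "card (J_hess u) = 6"
proof -
  have "j_cbrt u \<noteq> 0"
    using j_cbrt_nonzero_if_A_hess_nonzero[OF u] B_hess_nonzero_if_A_hess_eq_0[OF two three] B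
    by blast
  then show ?thesis
    using card_J_hess_eq_3_mult_card_j_cbrt_fibre[OF w u three]
      card_j_cbrt_fibre_if_B_hess_eq_0[OF w u two three B] by simp
qed

lemma card_J_hess_if_A_hess_B_hess_nonzero:
  assumes w: "(w::'a::field)\<^sup>2 + w + 1 = 0" and u: "(u::'a) ^ 3 \<noteq> 27"
    and three: "(3::'a) \<noteq> 0" and AB: "A_hess u * B_hess u \<noteq> 0"
  shows "card (J_hess u) = 12"
  using card_J_hess_eq_3_mult_card_j_cbrt_fibre[OF w u three] AB
    j_cbrt_nonzero_if_A_hess_nonzero[OF u] card_j_cbrt_fibre_if_B_hess_nonzero[OF w u three]
  by simp

lemma card_J_hess_without_primitive_cube_root:
  assumes "\<And>w::'a::field. w\<^sup>2 + w + 1 \<noteq> 0" "(u::'a) ^ 3 \<noteq> 27" "(3::'a) \<noteq> 0"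
    "\<not> ((2::'a) = 0 \<and> u = 0)"
  shows "card (J_hess u) = 2"
  using J_hess_eq_j_cbrt_fibre[OF assms(1)] card_j_cbrt_fibre_without_primitive_cube_root[OF assms]
  by simp

lemma card_J_hess_if_3_eq_0:
  assumes three: "(3::'a::field) = 0" and u: "(u::'a) ^ 3 \<noteq> 27"
  shows "card (J_hess u) = 1"
proof -
  have "(27::'a) = 3 * 9" "(216::'a) = 3 * 72"
    by simp_all
  then have "(27::'a) = 0" "(216::'a) = 0"
    unfolding three by simp_all
  then have "j_cbrt v = v" if "v ^ 3 \<noteq> 27" for v :: 'a
    using that by (simp add: j_cbrt_def)
  then have "J_hess u = {v. v ^ 3 \<noteq> 27 \<and> v ^ 3 = u ^ 3}"
    unfolding J_hess_eq using u by auto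
  also have "\<dots> = {u}"
  proof -
    have "(v - u) ^ 3 = v ^ 3 - u ^ 3 - 3 * v * u * (v - u)" for v :: 'a
      by (Groebner_Basis.algebra)
    then have "v ^ 3 = u ^ 3 \<longleftrightarrow> v = u" for v
      using three by (metis mult_zero_left power_eq_0_iff right_minus_eq)
    then show ?thesis
      using u by auto
  qed
  finally show ?thesis
    by simp
qed

lemma card_J_hess_zero_if_2_eq_0:
  assumes two: "(2::'a::field) = 0"
  shows "card (J_hess (0::'a)) = 1"
proof -
  have "(27::'a) = 1 + 2 * 13" "(216::'a) = 2 * 108"
    by simp_all
  then have "(27::'a) = 1" "(216::'a) = 0"
    unfolding two by simp_all
  then have "J_hess (0::'a) = {0}"
    unfolding J_hess_eq by (auto simp: j_cbrt_def)
  then show ?thesis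
    by simp
qed

theorem mainTheorem9:
  fixes u :: "'a::{finite, field}"
  assumes "u ^ 3 \<noteq> 27"
  shows "(((CHAR('a) = 2 \<and> u = 0) \<or> CHAR('a) = 3) \<longrightarrow> card (J_hess u) = 1)
    \<and> ((card (UNIV :: 'a set) mod 3 = 1 \<and> CHAR('a) \<noteq> 2 \<and> A_hess u = 0) \<longrightarrow> card (J_hess u) = 4)
    \<and> ((card (UNIV :: 'a set) mod 3 = 1 \<and> CHAR('a) \<noteq> 2 \<and> B_hess u = 0) \<longrightarrow> card (J_hess u) = 6)
    \<and> ((card (UNIV :: 'a set) mod 3 = 1 \<and> A_hess u * B_hess u \<noteq> 0) \<longrightarrow> card (J_hess u) = 12)
    \<and> ((card (UNIV :: 'a set) mod 3 = 2 \<and> \<not> (CHAR('a) = 2 \<and> u = 0)) \<longrightarrow> card (J_hess u) = 2)"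
proof (intro conjI impI; (elim conjE)?)
  note two = two_eq_0_iff_CHAR[where ?'a='a] and three = three_nonzero_if_card_mod_3[where ?'a='a]
  show "card (J_hess u) = 1" if "(CHAR('a) = 2 \<and> u = 0) \<or> CHAR('a) = 3"
    using that card_J_hess_zero_if_2_eq_0 card_J_hess_if_3_eq_0[OF _ assms]
      two three_eq_0_iff_CHAR[where ?'a='a] by auto
  show "card (J_hess u) = 2" if "card (UNIV :: 'a set) mod 3 = 2" "\<not> (CHAR('a) = 2 \<and> u = 0)"
    using that card_J_hess_without_primitive_cube_root[OF no_primitive_cube_root_of_unity assms three]
      two by auto
  assume "card (UNIV :: 'a set) mod 3 = 1"
  then obtain w :: 'a where w: "w\<^sup>2 + w + 1 = 0" and "(3::'a) \<noteq> 0"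
    using primitive_cube_root_of_unity_exists three by force
  show "card (J_hess u) = 4" if "CHAR('a) \<noteq> 2" "A_hess u = 0"
    using card_J_hess_if_A_hess_eq_0[OF w] that two \<open>(3::'a) \<noteq> 0\<close> by simp
  show "card (J_hess u) = 6" if "CHAR('a) \<noteq> 2" "B_hess u = 0"
    using card_J_hess_if_B_hess_eq_0[OF w assms] that two \<open>(3::'a) \<noteq> 0\<close> by simp
  show "card (J_hess u) = 12" if "A_hess u * B_hess u \<noteq> 0"
    using card_J_hess_if_A_hess_B_hess_nonzero[OF w assms \<open>(3::'a) \<noteq> 0\<close> that] .
qed
end
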